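(* Fix integers $m \ge 1$ and $n_1,\dots,n_m \ge 2$, and consider the $m$-dimensional single parity-check product code transmitted over the binary erasure channel with erasure probability $\epsilon \in [0,1]$, as described in the context. Let $\mathbf{1} = (1,\dots,1) \in A_{\mathrm{info}}$ be the first information position in the successive cancellation decoding order. Then \[ \Pr[S_m(\mathbf{1}) \text{ is false}] = \Pr[E_m(a) \text{ is false}] \quad \text{for every } a \in A_{\mathrm{info}}. \] That is, the erasure probability of the first decoded information bit under successive cancellation decoding equals the erasure probability of each information bit under Elias' decoding. Moreover, this common value equals $\epsilon_m$, where $\epsilon_0 = \epsilon$ and \[ \epsilon_\ell = \epsilon_{\ell-1}\left(1-(1-\epsilon_{\ell-1})^{n_\ell-1}\right) \quad \text{for } \ell = 1,\dots,m. \]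
   Context: Index set and code. Let $A = \{1,\dots,n_1\}\times\cdots\times\{1,\dots,n_m\}$. The $m$-dimensional single parity-check product code (SPC-PC) consists of all binary arrays $x: A \to \{0,1\}$ such that every line in every direction $\ell$ has even weight; a line in direction $\ell$ is obtained by fixing all coordinates except the $\ell$-th. This is the product of the $(n_\ell, n_\ell-1)$ SPC codes, so $n = \prod_\ell n_\ell$ and $k = \prod_\ell (n_\ell-1)$. The information positions are $A_{\mathrm{info}} = \{a \in A : a_\ell \le n_\ell-1 \text{ for all } \ell\}$; a codeword is uniquely determined by its entries there, and these entries are the information bits. Channel. Each codeword entry is independently erased with probability $\epsilon$ and otherwise received correctly. Notation. For $\ell = 0,\dots,m$ let $A_\ell = \{a \in A : a_i \le n_i-1 \text{ for all } i \le \ell\}$, so $A_0 = A$ and $A_m = A_{\mathrm{info}}$. For $a \in A$ and $b \in \{1,\dots,n_\ell\}$, let $a[\ell\leftarrow b]$ denote $a$ with its $\ell$-th coordinate replaced by $b$. Elias' decoder on the erasure channel. This decoder processes dimensions $1,\dots,m$ in one sweep, applying local SPC decoding to each line. For $a \in A$, $E_0(a)$ is true iff entry $a$ is not erased. For $\ell \ge 1$ and $a \in A_\ell$, $E_\ell(a)$ is true iff $E_{\ell-1}(a)$ is true, or $E_{\ell-1}(a[\ell\leftarrow b])$ is true for all $b \in \{1,\dots,n_\ell\}\setminus\{a_\ell\}$. The information bit at $a \in A_{\mathrm{info}}$ is recovered iff $E_m(a)$ is true, and is declared erased otherwise. Successive cancellation (SC) decoder on the erasure channel. The information bits are decoded in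 lexicographic order of $(a_1,\dots,a_m)$, and each local SPC decision uses the previously decided bits. Assuming all earlier bits were decided correctly, the status is given as follows. $S_0 = E_0$. For $\ell \ge 1$ and $a \in A_\ell$, $S_\ell(a)$ is true iff $S_{\ell-1}(a)$ is true, or $S_{\ell-1}(a[\ell\leftarrow b])$ is true for all $b$ with $a_\ell < b \le n_\ell$. The information bit at $a$ is recovered iff $S_m(a)$ is true. *)

theory Defs
  imports Complex_Main "HOL-Library.FuncSet"
begin

text \<open>Positions are functions a :: nat => nat with a i in {1..n i} for i in {1..m}
  (extensional: undefined outside {1..m}).  The block lengths are n 1, ..., n m.\<close>

definition pos_set :: "nat \<Rightarrow> (nat \<Rightarrow> nat) \<Rightarrow> (nat \<Rightarrow> nat) set" where
  "pos_set m n = PiE {1..m} (\<lambda>i. {1..n i})"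

definition info_set :: "nat \<Rightarrow> (nat \<Rightarrow> nat) \<Rightarrow> (nat \<Rightarrow> nat) set" where
  "info_set m n = PiE {1..m} (\<lambda>i. {1..n i - 1})"

text \<open>An erasure pattern w : positions -> bool, with w a = True iff entry a is NOT erased.\<close>

fun elias :: "(nat \<Rightarrow> nat) \<Rightarrow> nat \<Rightarrow> ((nat \<Rightarrow> nat) \<Rightarrow> bool) \<Rightarrow> (nat \<Rightarrow> nat) \<Rightarrow> bool" where
  "elias n 0 w a = w a"
| "elias n (Suc l) w a =
     (elias n l w a \<or>
      (\<forall>b \<in> {1..n (Suc l)} - {a (Suc l)}. elias n l w (a(Suc l := b))))"

fun sc :: "(nat \<Rightarrow> nat) \<Rightarrow> nat \<Rightarrow> ((nat \<Rightarrow> nat) \<Rightarrow> bool) \<Rightarrow> (nat \<Rightarrow> nat) \<Rightarrow> bool" where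
  "sc n 0 w a = w a"
| "sc n (Suc l) w a =
     (sc n l w a \<or>
      (\<forall>b \<in> {a (Suc l)<..n (Suc l)}. sc n l w (a(Suc l := b))))"

definition bec_prob :: "nat \<Rightarrow> (nat \<Rightarrow> nat) \<Rightarrow> real \<Rightarrow> (((nat \<Rightarrow> nat) \<Rightarrow> bool) \<Rightarrow> bool) \<Rightarrow> real" where
  "bec_prob m n eps P =
     (\<Sum>w \<in> PiE (pos_set m n) (\<lambda>_. UNIV :: bool set).
        (if P w then (\<Prod>a \<in> pos_set m n. if w a then 1 - eps else eps) else 0))"

fun eps_seq :: "(nat \<Rightarrow> nat) \<Rightarrow> real \<Rightarrow> nat \<Rightarrow> real" where
  "eps_seq n eps 0 = eps"
| "eps_seq n eps (Suc l) = eps_seq n eps l * (1 - (1 - eps_seq n eps l) ^ (n (Suc l) - 1))"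

end

theory Submission
  imports Defs "HOL-Probability.Product_PMF"
begin

text \<open>Both decoders are instances of one sweep: after dimension \<open>l\<close>, position \<open>a\<close> is
  recovered iff it was recovered before, or all positions \<open>a[l \<leftarrow> b]\<close> with \<open>b \<in> B\<close> were.
  For Elias' decoder \<open>B\<close> is the rest of the line through \<open>a\<close>; for successive cancellation
  it is the part of the line after \<open>a\<close>, which for the first bit also has \<open>n\<^sub>l - 1\<close> elements.
  The status after dimension \<open>l\<close> depends only on the erasures in the slab of positions that
  agree with \<open>a\<close> in the coordinates \<open>l+1, \<dots>, m\<close>, and these slabs are disjoint for distinct
  positions on a line in direction \<open>l\<close>. So the events in the recursion are independent, and
  by induction the failure probability obeys the recursion of \<open>eps_seq\<close> at every position
  the sweep visits.\<close>

definition depends_on :: "'a set \<Rightarrow> (('a \<Rightarrow> 'b) \<Rightarrow> bool) \<Rightarrow> bool" where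
  "depends_on S P \<longleftrightarrow> (\<forall>f g. (\<forall>x\<in>S. f x = g x) \<longrightarrow> P f = P g)"

lemma depends_onD: "depends_on S P \<Longrightarrow> (\<And>x. x \<in> S \<Longrightarrow> f x = g x) \<Longrightarrow> P f = P g"
  unfolding depends_on_def by blast

lemma depends_on_mono: "depends_on S P \<Longrightarrow> S \<subseteq> T \<Longrightarrow> depends_on T P"
  unfolding depends_on_def by blast

lemma depends_on_not: "depends_on S P \<Longrightarrow> depends_on S (\<lambda>f. \<not> P f)"
  unfolding depends_on_def by metis

lemma depends_on_conj:
  "depends_on S P \<Longrightarrow> depends_on T Q \<Longrightarrow> depends_on (S \<union> T) (\<lambda>f. P f \<and> Q f)"
  unfolding depends_on_def by (metis UnCI)

lemma depends_on_disj:
  "depends_on S P \<Longrightarrow> depends_on T Q \<Longrightarrow> depends_on (S \<union> T) (\<lambda>f. P f \<or> Q f)"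
  unfolding depends_on_def by (metis UnCI)

lemma depends_on_Ball:
  fixes P :: "'j \<Rightarrow> ('a \<Rightarrow> 'b) \<Rightarrow> bool"
  assumes "\<And>j. j \<in> J \<Longrightarrow> depends_on (S j) (P j)"
  shows "depends_on (\<Union>j\<in>J. S j) (\<lambda>f. \<forall>j\<in>J. P j f)"
  unfolding depends_on_def
proof (intro allI impI)
  fix f g :: "'a \<Rightarrow> 'b"
  assume "\<forall>x\<in>(\<Union>j\<in>J. S j). f x = g x"
  then have "P j f = P j g" if "j \<in> J" for j
    using that by (intro depends_onD[OF assms]) auto
  then show "(\<forall>j\<in>J. P j f) = (\<forall>j\<in>J. P j g)"
    by blast
qed

lemma measure_pmf_Collect_not:
  "measure (measure_pmf M) {x. \<not> P x} = 1 - measure (measure_pmf M) {x. P x}"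
  using measure_pmf.prob_compl[of "{x. P x}" M] by (simp add: Collect_neg_eq Compl_eq_Diff_UNIV)

lemma measure_pair_pmf_Times:
  "measure (measure_pmf (pair_pmf M N)) (A \<times> B) =
     measure (measure_pmf M) A * measure (measure_pmf N) B"
proof -
  have "(A \<times> B) \<inter> set_pmf (pair_pmf M N) = (A \<inter> set_pmf M) \<times> (B \<inter> set_pmf N)"
    by (auto simp: set_pair_pmf)
  then have "measure (measure_pmf (pair_pmf M N)) (A \<times> B) =
      measure (measure_pmf M) (A \<inter> set_pmf M) * measure (measure_pmf N) (B \<inter> set_pmf N)"
    by (metis measure_Int_set_pmf measure_pmf_prob_product countable_set_pmf countable_Int2)
  then show ?thesis
    by (simp add: measure_Int_set_pmf)
qed

lemma measure_Pi_pmf_depends_on: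
  assumes "finite X" "S \<subseteq> X" "depends_on S P"
  shows "measure (measure_pmf (Pi_pmf X d p)) {f. P f} = measure (measure_pmf (Pi_pmf S d p)) {f. P f}"
proof -
  have "P (\<lambda>x. if x \<in> S then f x else d) = P f" for f
    by (rule depends_onD[OF assms(3)]) simp
  then have "(\<lambda>f x. if x \<in> S then f x else d) -` {f. P f} = {f. P f}"
    by auto
  then show ?thesis
    by (simp add: Pi_pmf_subset[OF assms(1,2)])
qed

lemma measure_Pi_pmf_union_conj:
  assumes "finite S" "finite T" "S \<inter> T = {}" "depends_on S P" "depends_on T Q"
  shows "measure (measure_pmf (Pi_pmf (S \<union> T) d p)) {f. P f \<and> Q f} =
    measure (measure_pmf (Pi_pmf S d p)) {f. P f} * measure (measure_pmf (Pi_pmf T d p)) {f. Q f}"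
proof -
  have "P (\<lambda>x. if x \<in> S then f x else g x) = P f" for f g
    by (rule depends_onD[OF assms(4)]) simp
  moreover have "Q (\<lambda>x. if x \<in> S then f x else g x) = Q g" for f g
    by (rule depends_onD[OF assms(5)]) (use assms(3) in auto)
  ultimately have "(\<lambda>(f, g) x. if x \<in> S then f x else g x) -` {f. P f \<and> Q f} =
      {f. P f} \<times> {f. Q f}"
    by auto
  then show ?thesis
    using assms(1-3) by (simp add: Pi_pmf_union measure_pair_pmf_Times)
qed

lemma measure_Pi_pmf_conj:
  assumes "finite X" "S \<subseteq> X" "T \<subseteq> X" "S \<inter> T = {}" "depends_on S P" "depends_on T Q"
  shows "measure (measure_pmf (Pi_pmf X d p)) {f. P f \<and> Q f} =
    measure (measure_pmf (Pi_pmf X d p)) {f. P f} * measure (measure_pmf (Pi_pmf X d p)) {f. Q f}"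
proof -
  have "finite S" "finite T" "S \<union> T \<subseteq> X"
    using assms(1-3) finite_subset by blast+
  then have "measure (measure_pmf (Pi_pmf X d p)) {f. P f \<and> Q f} =
      measure (measure_pmf (Pi_pmf (S \<union> T) d p)) {f. P f \<and> Q f}"
    using assms by (intro measure_Pi_pmf_depends_on depends_on_conj)
  also have "\<dots> =
      measure (measure_pmf (Pi_pmf S d p)) {f. P f} * measure (measure_pmf (Pi_pmf T d p)) {f. Q f}"
    using \<open>finite S\<close> \<open>finite T\<close> assms by (intro measure_Pi_pmf_union_conj)
  also have "\<dots> =
      measure (measure_pmf (Pi_pmf X d p)) {f. P f} * measure (measure_pmf (Pi_pmf X d p)) {f. Q f}"
    using assms by (simp add: measure_Pi_pmf_depends_on)
  finally show ?thesis .
qed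

lemma measure_Pi_pmf_Ball:
  assumes "finite X" "finite J" "\<And>j. j \<in> J \<Longrightarrow> S j \<subseteq> X"
    and "\<And>i j. i \<in> J \<Longrightarrow> j \<in> J \<Longrightarrow> i \<noteq> j \<Longrightarrow> S i \<inter> S j = {}"
    and "\<And>j. j \<in> J \<Longrightarrow> depends_on (S j) (P j)"
  shows "measure (measure_pmf (Pi_pmf X d p)) {f. \<forall>j\<in>J. P j f} =
    (\<Prod>j\<in>J. measure (measure_pmf (Pi_pmf X d p)) {f. P j f})"
  using assms(2-5)
proof (induction J rule: finite_induct)
  case empty
  then show ?case
    by simp
next
  case (insert j J)
  have "S j \<inter> (\<Union>i\<in>J. S i) = {}"
    using insert.hyps(2) insert.prems(2) by blast
  moreover have "depends_on (\<Union>i\<in>J. S i) (\<lambda>f. \<forall>i\<in>J. P i f)"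
    using insert.prems(3) by (intro depends_on_Ball) blast
  ultimately have "measure (measure_pmf (Pi_pmf X d p)) {f. P j f \<and> (\<forall>i\<in>J. P i f)} =
      measure (measure_pmf (Pi_pmf X d p)) {f. P j f} *
      measure (measure_pmf (Pi_pmf X d p)) {f. \<forall>i\<in>J. P i f}"
    using insert.prems by (intro measure_Pi_pmf_conj[OF assms(1)]) auto
  with insert show ?case
    by simp
qed

fun sweep :: "(nat \<Rightarrow> (nat \<Rightarrow> nat) \<Rightarrow> nat set) \<Rightarrow> nat \<Rightarrow> ((nat \<Rightarrow> nat) \<Rightarrow> bool) \<Rightarrow> (nat \<Rightarrow> nat) \<Rightarrow> bool"
  where
    "sweep B 0 w a = w a"
  | "sweep B (Suc l) w a = (sweep B l w a \<or> (\<forall>b\<in>B l a. sweep B l w (a(Suc l := b))))"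

lemma elias_eq_sweep: "elias n l = sweep (\<lambda>l a. {1..n (Suc l)} - {a (Suc l)}) l"
  by (induction l) (simp_all add: fun_eq_iff)

lemma sc_eq_sweep: "sc n l = sweep (\<lambda>l a. {a (Suc l)<..n (Suc l)}) l"
  by (induction l) (simp_all add: fun_eq_iff)

definition slab :: "nat \<Rightarrow> (nat \<Rightarrow> nat) \<Rightarrow> nat \<Rightarrow> (nat \<Rightarrow> nat) \<Rightarrow> (nat \<Rightarrow> nat) set" where
  "slab m n l a = {x \<in> pos_set m n. \<forall>i\<in>{l<..m}. x i = a i}"

lemma slab_subset_pos_set: "slab m n l a \<subseteq> pos_set m n"
  unfolding slab_def by blast

lemma slab_subset_slab_Suc: "slab m n l a \<subseteq> slab m n (Suc l) a"
  unfolding slab_def by auto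

lemma slab_fun_upd_subset: "slab m n l (a(Suc l := b)) \<subseteq> slab m n (Suc l) a"
  unfolding slab_def by auto

lemma slab_disjoint:
  "Suc l \<le> m \<Longrightarrow> a (Suc l) \<noteq> a' (Suc l) \<Longrightarrow> slab m n l a \<inter> slab m n l a' = {}"
  unfolding slab_def by auto

lemma finite_pos_set: "finite (pos_set m n)"
  unfolding pos_set_def by (intro finite_PiE) auto

lemma fun_upd_in_pos_set:
  "a \<in> pos_set m n \<Longrightarrow> k \<in> {1..m} \<Longrightarrow> b \<in> {1..n k} \<Longrightarrow> a(k := b) \<in> pos_set m n"
  unfolding pos_set_def by (auto simp: PiE_iff extensional_def)

text \<open>The default value \<open>undefined\<close> makes the support of \<open>bec_pmf\<close> lie in the
  set \<open>PiE (pos_set m n) (\<lambda>_. UNIV)\<close> summed over by \<open>bec_prob\<close>.\<close>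

definition bec_pmf :: "nat \<Rightarrow> (nat \<Rightarrow> nat) \<Rightarrow> real \<Rightarrow> ((nat \<Rightarrow> nat) \<Rightarrow> bool) pmf" where
  "bec_pmf m n eps = Pi_pmf (pos_set m n) undefined (\<lambda>_. bernoulli_pmf (1 - eps))"

lemma measure_bec_pmf_erased:
  assumes "0 \<le> eps" "eps \<le> 1" "a \<in> pos_set m n"
  shows "measure (measure_pmf (bec_pmf m n eps)) {w. \<not> w a} = eps"
proof -
  have "measure (measure_pmf (bec_pmf m n eps)) {w. \<not> w a} =
      measure (measure_pmf (map_pmf (\<lambda>w. w a) (bec_pmf m n eps))) {False}"
    by (simp add: vimage_def)
  also have "map_pmf (\<lambda>w. w a) (bec_pmf m n eps) = bernoulli_pmf (1 - eps)"
    unfolding bec_pmf_def using assms(3) finite_pos_set by (simp add: Pi_pmf_component)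
  finally show ?thesis
    using assms(1,2) by (simp add: measure_pmf_single)
qed

lemma bec_prob_eq_measure:
  assumes "0 \<le> eps" "eps \<le> 1"
  shows "bec_prob m n eps P = measure (measure_pmf (bec_pmf m n eps)) {w. P w}"
proof -
  let ?M = "bec_pmf m n eps"
  let ?W = "PiE (pos_set m n) (\<lambda>_. UNIV :: bool set)"
  have "finite ?W"
    by (simp add: finite_PiE finite_pos_set)
  have "set_pmf ?M \<subseteq> ?W"
    using set_Pi_pmf_subset[OF finite_pos_set]
    unfolding bec_pmf_def by (fastforce simp: PiE_def extensional_def)
  have pmf_bec_pmf: "pmf ?M w = (\<Prod>a\<in>pos_set m n. if w a then 1 - eps else eps)" if "w \<in> ?W" for w
    using that assms
    by (auto simp: bec_pmf_def pmf_Pi finite_pos_set PiE_def extensional_def intro!: prod.cong)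
  have "measure (measure_pmf ?M) {w. P w} = measure (measure_pmf ?M) ({w. P w} \<inter> ?W)"
    using \<open>set_pmf ?M \<subseteq> ?W\<close>
    by (metis (no_types, lifting) inf.absorb_iff2 inf_assoc inf_commute measure_Int_set_pmf)
  also have "\<dots> = sum (pmf ?M) ({w. P w} \<inter> ?W)"
    using \<open>finite ?W\<close> by (simp add: measure_measure_pmf_finite)
  also have "\<dots> = (\<Sum>w\<in>?W. if P w then pmf ?M w else 0)"
    using sum.inter_restrict[OF \<open>finite ?W\<close>, of "pmf ?M" "{w. P w}"] by (simp add: Int_commute)
  also have "\<dots> = bec_prob m n eps P"
    unfolding bec_prob_def by (intro sum.cong) (simp_all add: pmf_bec_pmf)
  finally show ?thesis ..
qed

text \<open>\<open>V\<close> is an invariant of the pairs \<open>(l, a)\<close> reached when unfolding \<open>sweep B\<close>.\<close>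

locale sweep_decoder =
  fixes m :: nat and n :: "nat \<Rightarrow> nat"
    and B :: "nat \<Rightarrow> (nat \<Rightarrow> nat) \<Rightarrow> nat set" and V :: "nat \<Rightarrow> (nat \<Rightarrow> nat) \<Rightarrow> bool"
  assumes V_pos_set: "V l a \<Longrightarrow> a \<in> pos_set m n"
    and V_le: "V l a \<Longrightarrow> l \<le> m"
    and V_Suc: "V (Suc l) a \<Longrightarrow> V l a"
    and V_fun_upd: "V (Suc l) a \<Longrightarrow> b \<in> B l a \<Longrightarrow> V l (a(Suc l := b))"
    and B_subset: "V (Suc l) a \<Longrightarrow> B l a \<subseteq> {1..n (Suc l)} - {a (Suc l)}"
    and card_B: "V (Suc l) a \<Longrightarrow> card (B l a) = n (Suc l) - 1"
begin

lemma depends_on_sweep: "V l a \<Longrightarrow> depends_on (slab m n l a) (\<lambda>w. sweep B l w a)"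
proof (induction l arbitrary: a)
  case 0
  then have "a \<in> slab m n 0 a"
    by (simp add: slab_def V_pos_set)
  then show ?case
    by (simp add: depends_on_def)
next
  case (Suc l)
  have "depends_on (slab m n (Suc l) a) (\<lambda>w. sweep B l w a)"
    using Suc.IH[OF V_Suc[OF Suc.prems]] slab_subset_slab_Suc by (rule depends_on_mono)
  moreover have "depends_on (\<Union>b\<in>B l a. slab m n l (a(Suc l := b)))
      (\<lambda>w. \<forall>b\<in>B l a. sweep B l w (a(Suc l := b)))"
    by (rule depends_on_Ball) (rule Suc.IH[OF V_fun_upd[OF Suc.prems]])
  then have "depends_on (slab m n (Suc l) a) (\<lambda>w. \<forall>b\<in>B l a. sweep B l w (a(Suc l := b)))"
    by (rule depends_on_mono) (use slab_fun_upd_subset in blast)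
  ultimately show ?case
    using depends_on_disj by fastforce
qed

lemma measure_not_sweep_Suc:
  assumes "V (Suc l) a"
  shows "measure (measure_pmf (bec_pmf m n eps)) {w. \<not> sweep B (Suc l) w a} =
    measure (measure_pmf (bec_pmf m n eps)) {w. \<not> sweep B l w a} *
    (1 - (\<Prod>b\<in>B l a. measure (measure_pmf (bec_pmf m n eps)) {w. sweep B l w (a(Suc l := b))}))"
proof -
  let ?M = "measure_pmf (bec_pmf m n eps)"
  let ?slab = "\<lambda>b. slab m n l (a(Suc l := b))"
  have "Suc l \<le> m"
    using V_le[OF assms] .
  have "B l a \<subseteq> {1..n (Suc l)} - {a (Suc l)}"
    using B_subset[OF assms] .
  then have "finite (B l a)"
    by (rule finite_subset) simp
  have depends: "depends_on (?slab b) (\<lambda>w. sweep B l w (a(Suc l := b)))" if "b \<in> B l a" for b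
    using depends_on_sweep[OF V_fun_upd[OF assms that]] .
  have "measure ?M {w. \<not> sweep B (Suc l) w a} =
      measure ?M {w. \<not> sweep B l w a \<and> \<not> (\<forall>b\<in>B l a. sweep B l w (a(Suc l := b)))}"
    by simp
  also have "\<dots> = measure ?M {w. \<not> sweep B l w a} *
      measure ?M {w. \<not> (\<forall>b\<in>B l a. sweep B l w (a(Suc l := b)))}"
    unfolding bec_pmf_def
  proof (rule measure_Pi_pmf_conj[OF finite_pos_set slab_subset_pos_set])
    show "(\<Union>b\<in>B l a. ?slab b) \<subseteq> pos_set m n"
      using slab_subset_pos_set by blast
    have "slab m n l a \<inter> ?slab b = {}" if "b \<in> B l a" for b
      using that \<open>B l a \<subseteq> _\<close> by (intro slab_disjoint[OF \<open>Suc l \<le> m\<close>]) auto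
    then show "slab m n l a \<inter> (\<Union>b\<in>B l a. ?slab b) = {}"
      by blast
    show "depends_on (slab m n l a) (\<lambda>w. \<not> sweep B l w a)"
      using depends_on_sweep[OF V_Suc[OF assms]] by (rule depends_on_not)
    show "depends_on (\<Union>b\<in>B l a. ?slab b) (\<lambda>w. \<not> (\<forall>b\<in>B l a. sweep B l w (a(Suc l := b))))"
      using depends by (intro depends_on_not depends_on_Ball)
  qed
  also have "measure ?M {w. \<not> (\<forall>b\<in>B l a. sweep B l w (a(Suc l := b)))} =
      1 - measure ?M {w. \<forall>b\<in>B l a. sweep B l w (a(Suc l := b))}"
    by (rule measure_pmf_Collect_not)
  also have "measure ?M {w. \<forall>b\<in>B l a. sweep B l w (a(Suc l := b))} =
      (\<Prod>b\<in>B l a. measure ?M {w. sweep B l w (a(Suc l := b))})"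
    unfolding bec_pmf_def
    by (rule measure_Pi_pmf_Ball[where S = ?slab, OF finite_pos_set \<open>finite (B l a)\<close> slab_subset_pos_set])
      (auto intro!: slab_disjoint[OF \<open>Suc l \<le> m\<close>] depends)
  finally show ?thesis .
qed

lemma measure_not_sweep:
  assumes "0 \<le> eps" "eps \<le> 1"
  shows "V l a \<Longrightarrow> measure (measure_pmf (bec_pmf m n eps)) {w. \<not> sweep B l w a} = eps_seq n eps l"
proof (induction l arbitrary: a)
  case 0
  then show ?case
    using measure_bec_pmf_erased[OF assms V_pos_set] by simp
next
  case (Suc l)
  have "measure (measure_pmf (bec_pmf m n eps)) {w. sweep B l w (a(Suc l := b))} =
      1 - eps_seq n eps l" if "b \<in> B l a" for b
    using Suc.IH[OF V_fun_upd[OF Suc.prems that]]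
      measure_pmf_Collect_not[of "bec_pmf m n eps" "\<lambda>w. sweep B l w (a(Suc l := b))"]
    by linarith
  then show ?case
    unfolding measure_not_sweep_Suc[OF Suc.prems]
    using Suc.IH[OF V_Suc[OF Suc.prems]] card_B[OF Suc.prems] by (simp cong: prod.cong)
qed

end

interpretation elias_decoder: sweep_decoder m n "\<lambda>l a. {1..n (Suc l)} - {a (Suc l)}"
  "\<lambda>l a. a \<in> pos_set m n \<and> l \<le> m" for m n
proof
  fix l a
  assume "a \<in> pos_set m n \<and> Suc l \<le> m"
  then have "a (Suc l) \<in> {1..n (Suc l)}"
    by (auto simp: pos_set_def PiE_iff)
  then show "card ({1..n (Suc l)} - {a (Suc l)}) = n (Suc l) - 1"
    by (simp add: card_Diff_singleton)
qed (auto intro: fun_upd_in_pos_set)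

interpretation sc_decoder: sweep_decoder m n "\<lambda>l a. {a (Suc l)<..n (Suc l)}"
  "\<lambda>l a. a \<in> pos_set m n \<and> l \<le> m \<and> (\<forall>i\<in>{1..l}. a i = 1)" for m n
  by unfold_locales (auto intro: fun_upd_in_pos_set)

theorem lemma1:
  fixes m :: nat and n :: "nat \<Rightarrow> nat" and eps :: real
  assumes "m \<ge> 1"
    and "\<forall>i \<in> {1..m}. n i \<ge> 2"
    and "0 \<le> eps" and "eps \<le> 1"
  shows "(\<forall>a \<in> info_set m n.
            bec_prob m n eps (\<lambda>w. \<not> sc n m w (restrict (\<lambda>_. 1) {1..m}))
              = bec_prob m n eps (\<lambda>w. \<not> elias n m w a))
       \<and> bec_prob m n eps (\<lambda>w. \<not> sc n m w (restrict (\<lambda>_. 1) {1..m})) = eps_seq n eps m"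
proof -
  have "restrict (\<lambda>_. 1) {1..m} \<in> pos_set m n"
    using assms(2) by (auto simp: pos_set_def)
  then have sc_first: "bec_prob m n eps (\<lambda>w. \<not> sc n m w (restrict (\<lambda>_. 1) {1..m})) = eps_seq n eps m"
    by (simp add: bec_prob_eq_measure[OF assms(3,4)] sc_eq_sweep sc_decoder.measure_not_sweep[OF assms(3,4)])
  have "info_set m n \<subseteq> pos_set m n"
    unfolding info_set_def pos_set_def by (rule PiE_mono) auto
  then have "bec_prob m n eps (\<lambda>w. \<not> elias n m w a) = eps_seq n eps m" if "a \<in> info_set m n" for a
    unfolding bec_prob_eq_measure[OF assms(3,4)] elias_eq_sweep
    using that by (intro elias_decoder.measure_not_sweep[OF assms(3,4)]) auto
  with sc_first show ?thesis
    by simp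
qed

end
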